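(* Let $\lambda$ be a partition whose 2-quotient $(\mu,\nu)$ is non-empty (i.e. $|\mu|+|\nu|>0$). Then the subleading coefficient $r_{\lambda,1}$ of $R_\lambda$ satisfies $r_{\lambda,1}=-c(\lambda)$, where $c(\lambda)=\sum_{(i,j)\in\lambda}(j-i)$ is the sum of the contents of the boxes of the Young diagram of $\lambda$.
   Context: Partitions $\lambda=(\lambda_1\ge\dots\ge\lambda_{\ell(\lambda)}>0)$; Young diagram $\{(i,j):1\le i\le\ell(\lambda),1\le j\le\lambda_i\}$; degree vector $n_i=\lambda_i+\ell(\lambda)-i$, $\Delta(n_\lambda)=\prod_{i<j}(n_j-n_i)$. Hermite: $\mathrm{He}_0=1,\mathrm{He}_1=x,\mathrm{He}_n=x\mathrm{He}_{n-1}-(n-1)\mathrm{He}_{n-2}$; $\mathrm{He}_\lambda=\mathrm{Wr}[\mathrm{He}_{n_1},\dots,\mathrm{He}_{n_{\ell(\lambda)}}]/\Delta(n_\lambda)$. The 2-core $\bar\lambda$ of $\lambda$ is obtained by repeatedly removing dominoes ($1\times2$ or $2\times1$ rectangles) from the Young diagram, keeping a Young diagram each time, as long as possible; the 2-quotient $(\mu,\nu)$ is a pair of partitions with $|\mu|+|\nu|=(|\lambda|-|\bar\lambda|)/2$ (the number of dominoes removed). There is a monic polynomial $R_\lambda$ of degree $|\mu|+|\nu|$ with $\mathrm{He}_\lambda(x)=x^{|\bar\lambda|}R_\lambda(x^2)$; write $R_\lambda(x)=\sum_{j=0}^{|\mu|+|\nu|}r_{\lambda,j}x^{|\mu|+|\nu|-j}$.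 *)

theory Defs
  imports "HOL-Computational_Algebra.Polynomial" "HOL-Combinatorics.Permutations"
begin

definition is_partition :: "nat list \<Rightarrow> bool" where
  "is_partition lam \<longleftrightarrow> sorted_wrt (\<ge>) lam \<and> (\<forall>x\<in>set lam. 0 < x)"

definition young_diagram :: "nat list \<Rightarrow> (nat \<times> nat) set" where
  "young_diagram lam = {(i, j). 1 \<le> i \<and> i \<le> length lam \<and> 1 \<le> j \<and> j \<le> lam ! (i - 1)}"

definition is_domino :: "(nat \<times> nat) set \<Rightarrow> bool" where
  "is_domino D \<longleftrightarrow> (\<exists>i j. D = {(i, j), (i, Suc j)} \<or> D = {(i, j), (Suc i, j)})"

definition domino_removal :: "nat list \<Rightarrow> nat list \<Rightarrow> bool" where
  "domino_removal lam mu \<longleftrightarrow> is_partition mu \<and> young_diagram mu \<subseteq> young_diagram lam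
     \<and> is_domino (young_diagram lam - young_diagram mu)"

text \<open>The 2-core: result of removing dominoes as long as possible (unique).\<close>
definition two_core :: "nat list \<Rightarrow> nat list" where
  "two_core lam = (THE kap. domino_removal\<^sup>*\<^sup>* lam kap \<and> \<not> (\<exists>nu. domino_removal kap nu))"

text \<open>|mu| + |nu| for the 2-quotient (mu,nu): the number of dominoes removed.\<close>
definition quot_size :: "nat list \<Rightarrow> nat" where
  "quot_size lam = (sum_list lam - sum_list (two_core lam)) div 2"

fun hermite :: "nat \<Rightarrow> real poly" where
  "hermite 0 = 1"
| "hermite (Suc 0) = [:0, 1:]"
| "hermite (Suc (Suc n)) = [:0, 1:] * hermite (Suc n) - smult (real (Suc n)) (hermite n)"

definition wronskian :: "real poly list \<Rightarrow> real poly" where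
  "wronskian fs = (\<Sum>p | p permutes {..<length fs}.
      of_int (sign p) * (\<Prod>i<length fs. (pderiv ^^ i) (fs ! p i)))"

text \<open>Degree vector n_i = lam_i + l - i (stated 0-based: index i stands for i+1).\<close>
definition degvec :: "nat list \<Rightarrow> nat list" where
  "degvec lam = map (\<lambda>i. lam ! i + length lam - Suc i) [0..<length lam]"

definition vandermonde_deg :: "nat list \<Rightarrow> int" where
  "vandermonde_deg lam = (let n = degvec lam; l = length lam in
     \<Prod>j<l. \<Prod>i<j. (int (n ! j) - int (n ! i)))"

definition hermite_partition :: "nat list \<Rightarrow> real poly" where
  "hermite_partition lam =
     smult (1 / of_int (vandermonde_deg lam)) (wronskian (map hermite (degvec lam)))"

definition R_poly :: "nat list \<Rightarrow> real poly" where
  "R_poly lam = (THE R. hermite_partition lam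
       = monom 1 (sum_list (two_core lam)) * pcompose R [:0, 0, 1:])"

definition content_sum :: "nat list \<Rightarrow> int" where
  "content_sum lam = (\<Sum>(i, j)\<in>young_diagram lam. int j - int i)"

end

(*
  He_lam = W / Delta, where W is the Wronskian of He_(n_1), ..., He_(n_l) for the degree vector n.
  Expanding each Hermite polynomial in monomials, the coefficient of x^m in W is a sum over
  exponent vectors kappa with sum kappa - l(l-1)/2 = m of products of Hermite coefficients times
  the Wronskian of the monomials x^(kappa_j), a Vandermonde determinant in falling factorials.
  A term survives only if the kappa_j are distinct, kappa_j <= n_j and kappa_j = n_j (mod 2); with
  a even and b odd degrees this forces m >= a(a-1) + b^2 - l(l-1)/2, which is the size of the
  2-core: domino removal preserves the checkerboard sum of the diagram, and the only partitions
  without removable dominoes are staircases. Hence He_lam = x^|core| R_lam(x^2). At degree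
  |lam| - 2 exactly one n_j is lowered by two, with Hermite coefficient -n_j(n_j-1)/2, and the
  resulting sum of determinants is 2 c(lam) Delta by row operations on falling factorials.
*)

theory Submission
  imports Defs "Jordan_Normal_Form.Determinant"
begin

section \<open>Young diagrams, contents and degree vectors\<close>

lemma young_diagram_Nil [simp]: "young_diagram [] = {}"
  by (simp add: young_diagram_def)

lemma young_diagram_Cons:
  "young_diagram (x # xs) = (\<lambda>j. (1, j)) ` {1..x} \<union> (\<lambda>(i, j). (Suc i, j)) ` young_diagram xs"
proof (intro equalityI subsetI)
  fix c assume "c \<in> young_diagram (x # xs)"
  then obtain i j where ij: "c = (i, j)" "1 \<le> i" "i \<le> Suc (length xs)" "1 \<le> j" "j \<le> (x # xs) ! (i - 1)"
    by (auto simp: young_diagram_def)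
  show "c \<in> (\<lambda>j. (1, j)) ` {1..x} \<union> (\<lambda>(i, j). (Suc i, j)) ` young_diagram xs"
  proof (cases i)
    case (Suc i')
    show ?thesis
    proof (cases i')
      case (Suc i'')
      have "(i', j) \<in> young_diagram xs"
        using ij \<open>i = Suc i'\<close> Suc by (simp add: young_diagram_def)
      then show ?thesis
        using ij \<open>i = Suc i'\<close> by force
    qed (use ij Suc in simp)
  qed (use ij in simp)
qed (auto simp: young_diagram_def)

lemma finite_young_diagram [simp]: "finite (young_diagram lam)"
  by (induction lam) (simp_all add: young_diagram_Cons)

lemma sum_young_diagram_Cons:
  "(\<Sum>c\<in>young_diagram (x # xs). f c) = (\<Sum>j=1..x. f (1, j)) + (\<Sum>(i, j)\<in>young_diagram xs. f (Suc i, j))"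
proof -
  have "inj_on (\<lambda>(i, j). (Suc i, j)) (young_diagram xs)"
    by (auto simp: inj_on_def)
  moreover have "(\<lambda>j. (1, j)) ` {1..x} \<inter> (\<lambda>(i, j). (Suc i, j)) ` young_diagram xs = {}"
    by (auto simp: young_diagram_def)
  ultimately show ?thesis
    unfolding young_diagram_Cons
    by (simp add: sum.union_disjoint sum.reindex inj_on_def case_prod_unfold comp_def)
qed

lemma card_young_diagram: "card (young_diagram lam) = sum_list lam"
proof (induction lam)
  case (Cons x xs)
  then show ?case
    using sum_young_diagram_Cons[of "\<lambda>_. 1 :: nat" x xs] by (simp add: case_prod_unfold)
qed simp

lemma content_sum_Cons:
  "content_sum (x # xs) = (\<Sum>j=1..x. int j - 1) + content_sum xs - int (sum_list xs)"
  by (simp add: content_sum_def sum_young_diagram_Cons case_prod_unfold sum_subtractf sum.distrib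
      flip: card_young_diagram)

lemma double_sum_lessThan: "2 * (\<Sum>i<n. of_nat i) = of_nat n * (of_nat n - 1 :: 'a :: comm_ring_1)"
  by (induction n) (simp_all add: algebra_simps)

lemma length_degvec [simp]: "length (degvec lam) = length lam"
  by (simp add: degvec_def)

lemma degvec_Nil [simp]: "degvec [] = []"
  by (simp add: degvec_def)

lemma degvec_nth: "i < length lam \<Longrightarrow> degvec lam ! i = lam ! i + length lam - Suc i"
  by (simp add: degvec_def)

lemma degvec_Cons: "degvec (x # xs) = (x + length xs) # degvec xs"
  by (rule nth_equalityI) (auto simp: degvec_nth nth_Cons split: nat.split)

lemma sum_list_degvec: "sum_list (degvec lam) = sum_list lam + (\<Sum>i<length lam. i)"
  by (induction lam) (simp_all add: degvec_Cons)

lemma sum_degvec_nth: "(\<Sum>j<length lam. degvec lam ! j) = sum_list lam + (\<Sum>i<length lam. i)"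
  using sum_list_degvec[of lam] by (simp add: sum_list_sum_nth atLeast0LessThan)

lemma degvec_strict_decreasing:
  assumes "is_partition lam" "i < j" "j < length lam"
  shows "degvec lam ! j < degvec lam ! i"
proof -
  have "lam ! j \<le> lam ! i"
    using assms unfolding is_partition_def sorted_wrt_iff_nth_less by auto
  then show ?thesis
    using assms(2,3) by (simp add: degvec_nth)
qed

lemma content_sum_degvec:
  "2 * real_of_int (content_sum lam) =
     (\<Sum>n\<leftarrow>degvec lam. real n * (real n - 1))
     - 2 * (real (length lam) - 1) * ((\<Sum>n\<leftarrow>degvec lam. real n) - (\<Sum>i<length lam. real i))
     - (\<Sum>i<length lam. real i * (real i - 1))"
proof (induction lam)
  case (Cons x xs)
  define L where "L = length xs"
  have row: "2 * (\<Sum>j=1..x. real j - 1) = real x * (real x - 1)"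
    by (induction x) (simp_all add: algebra_simps)
  have sum_xs: "real (sum_list xs) = (\<Sum>n\<leftarrow>degvec xs. real n) - (\<Sum>i<L. real i)"
    using arg_cong[OF sum_list_degvec[of xs], of real] by (simp add: L_def sum_list_of_nat)
  have "2 * real_of_int (content_sum (x # xs))
      = real x * (real x - 1) + 2 * real_of_int (content_sum xs) - 2 * real (sum_list xs)"
    using row by (simp add: content_sum_Cons of_int_sum)
  then show ?case
    unfolding Cons.IH sum_xs degvec_Cons
    by (simp add: L_def[symmetric] algebra_simps)
qed (simp add: content_sum_def)


section \<open>The 2-core\<close>

definition checkerboard_sum :: "nat list \<Rightarrow> int" where
  "checkerboard_sum lam = (\<Sum>(i, j)\<in>young_diagram lam. (-1) ^ (i + j))"

lemma checkerboard_sum_Cons: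
  "checkerboard_sum (x # xs) = (if odd x then 1 else 0) - checkerboard_sum xs"
proof -
  have "(\<Sum>j=1..x. (-1::int) ^ (1 + j)) = (if odd x then 1 else 0)"
    by (induction x) simp_all
  then show ?thesis
    by (simp add: checkerboard_sum_def sum_young_diagram_Cons case_prod_unfold sum_negf)
qed

definition odd_excess :: "nat list \<Rightarrow> int" where
  "odd_excess lam = int (length (filter odd (degvec lam))) - int (length (filter even (degvec lam)))"

lemma odd_excess_Cons:
  "odd_excess (x # xs) = odd_excess xs + (if odd (x + length xs) then 1 else -1)"
  by (simp add: odd_excess_def degvec_Cons)

lemma even_odd_excess_add_length: "even (odd_excess lam + int (length lam))"
proof -
  have "length (filter odd (degvec lam)) + length (filter even (degvec lam)) = length lam"
    using sum_length_filter_compl[of odd "degvec lam"] by (simp add: comp_def)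
  then show ?thesis
    unfolding odd_excess_def by presburger
qed

lemma checkerboard_sum_eq_iff:
  "checkerboard_sum lam = checkerboard_sum mu \<longleftrightarrow>
     odd_excess lam = odd_excess mu \<or> odd_excess lam = - odd_excess mu - 1"
proof -
  define h :: "int \<Rightarrow> int" where "h s = (if odd s then (s + 1) div 2 else - (s div 2))" for s
  have checkerboard: "checkerboard_sum nu = h (odd_excess nu)" for nu
  proof (induction nu)
    case (Cons x xs)
    have "even (odd_excess xs + int (length xs))"
      by (rule even_odd_excess_add_length)
    then show ?case
      unfolding checkerboard_sum_Cons odd_excess_Cons Cons.IH h_def
      by (cases "even x"; cases "even (length xs)") (auto, presburger+)
  qed (simp add: checkerboard_sum_def odd_excess_def h_def)
  have "h s = h t \<longleftrightarrow> s = t \<or> s = - t - 1" for s t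
    unfolding h_def by (auto split: if_splits) presburger+
  then show ?thesis
    by (simp add: checkerboard)
qed

definition staircase :: "nat \<Rightarrow> nat list" where
  "staircase k = rev [1..<Suc k]"

lemma staircase_0 [simp]: "staircase 0 = []"
  by (simp add: staircase_def)

lemma staircase_Suc: "staircase (Suc k) = Suc k # staircase k"
  by (simp add: staircase_def)

lemma length_staircase [simp]: "length (staircase k) = k"
  by (simp add: staircase_def)

lemma odd_excess_staircase: "odd_excess (staircase k) = int k"
  by (induction k) (simp_all add: staircase_Suc odd_excess_Cons, simp add: odd_excess_def)

lemma double_sum_staircase: "2 * sum_list (staircase k) = k * (k + 1)"
  by (induction k) (simp_all add: staircase_Suc)

lemma domino_removal_invariants:
  assumes "domino_removal lam mu"
  shows "checkerboard_sum mu = checkerboard_sum lam" and "sum_list lam = sum_list mu + 2"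
proof -
  have sub: "young_diagram mu \<subseteq> young_diagram lam"
    using assms by (simp add: domino_removal_def)
  obtain i j where "young_diagram lam - young_diagram mu = {(i, j), (i, Suc j)} \<or>
      young_diagram lam - young_diagram mu = {(i, j), (Suc i, j)}"
    using assms unfolding domino_removal_def is_domino_def by blast
  then have "(\<Sum>(i, j)\<in>young_diagram lam - young_diagram mu. (-1::int) ^ (i + j)) = 0"
    and "card (young_diagram lam - young_diagram mu) = 2"
    by auto
  then show "checkerboard_sum mu = checkerboard_sum lam"
    using sum.subset_diff[OF sub finite_young_diagram, of "\<lambda>(i, j). (-1::int) ^ (i + j)"]
    by (simp add: checkerboard_sum_def)
  show "sum_list lam = sum_list mu + 2"
    using \<open>card _ = 2\<close> card_Diff_subset[OF finite_young_diagram sub] card_mono[OF finite_young_diagram sub]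
    by (simp add: card_young_diagram)
qed

lemma rtranclp_domino_removal_invariants:
  assumes "domino_removal\<^sup>*\<^sup>* lam kap" "is_partition lam"
  shows "is_partition kap \<and> checkerboard_sum kap = checkerboard_sum lam
    \<and> sum_list kap \<le> sum_list lam \<and> even (sum_list lam - sum_list kap)"
  using assms(1)
proof (induction rule: rtranclp_induct)
  case (step mu nu)
  then show ?case
    using domino_removal_invariants[OF step(2)] by (auto simp: domino_removal_def)
qed (simp add: assms(2))

definition row_length :: "nat list \<Rightarrow> nat \<Rightarrow> nat" where
  "row_length lam i = (if i < length lam then lam ! i else 0)"

lemma young_diagram_row_length:
  "young_diagram lam = {(i, j). 1 \<le> i \<and> 1 \<le> j \<and> j \<le> row_length lam (i - 1)}"
  by (auto simp: young_diagram_def row_length_def split: if_splits)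

lemma row_length_Cons_0 [simp]: "row_length (x # xs) 0 = x"
  by (simp add: row_length_def)

lemma row_length_Cons_Suc [simp]: "row_length (x # xs) (Suc i) = row_length xs i"
  by (simp add: row_length_def)

lemma row_length_update:
  "r < length xs \<Longrightarrow> row_length (xs[r := v]) k = (if k = r then v else row_length xs k)"
  by (simp add: row_length_def)

lemma row_length_antimono:
  assumes "is_partition lam" "i \<le> j"
  shows "row_length lam j \<le> row_length lam i"
  using assms unfolding is_partition_def row_length_def sorted_wrt_iff_nth_less
  by (cases "i = j") auto

lemma sorted_if_row_length_antimono:
  assumes "\<And>i j. i < j \<Longrightarrow> row_length ys j \<le> row_length ys i"
  shows "sorted_wrt (\<ge>) ys"
  unfolding sorted_wrt_iff_nth_less
proof (intro allI impI)
  fix i j assume "i < j" "j < length ys"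
  then show "ys ! j \<le> ys ! i"
    using assms[of i j] by (simp add: row_length_def)
qed

lemma row_length_filter_pos:
  "sorted_wrt (\<ge>) ys \<Longrightarrow> row_length (filter (\<lambda>x. 0 < x) ys) i = row_length ys i"
proof (induction ys arbitrary: i)
  case (Cons y ys)
  show ?case
  proof (cases "0 < y")
    case True
    then show ?thesis
      using Cons by (cases i) simp_all
  next
    case False
    with Cons.prems have zeros: "\<forall>z\<in>set (y # ys). z = 0"
      by auto
    then have "filter (\<lambda>x. 0 < x) (y # ys) = []"
      by (auto simp: filter_empty_conv)
    moreover have "row_length (y # ys) i = 0"
      by (metis nth_mem row_length_def zeros)
    ultimately show ?thesis
      by (simp add: row_length_def)
  qed
qed simp

lemma domino_removal_by_row_lengths:
  assumes sorted: "sorted_wrt (\<ge>) ys" and le: "\<And>i. row_length ys i \<le> row_length mu i"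
    and domino: "is_domino {(i, j). 1 \<le> i \<and> row_length ys (i - 1) < j \<and> j \<le> row_length mu (i - 1)}"
  shows "domino_removal mu (filter (\<lambda>x. 0 < x) ys)"
proof -
  have diagram: "young_diagram (filter (\<lambda>x. 0 < x) ys) = young_diagram ys"
    using row_length_filter_pos[OF sorted] by (simp add: young_diagram_row_length)
  have "young_diagram ys \<subseteq> young_diagram mu"
    using le by (auto simp: young_diagram_row_length intro: order.trans)
  moreover have "young_diagram mu - young_diagram ys =
      {(i, j). 1 \<le> i \<and> row_length ys (i - 1) < j \<and> j \<le> row_length mu (i - 1)}"
    by (auto simp: young_diagram_row_length)
  moreover have "is_partition (filter (\<lambda>x. 0 < x) ys)"
    using sorted by (simp add: is_partition_def sorted_wrt_filter)
  ultimately show ?thesis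
    using domino by (simp add: domino_removal_def diagram)
qed

lemma domino_removable_from_row:
  assumes mu: "is_partition mu" and r: "r < length mu" and gap: "row_length mu (Suc r) + 2 \<le> mu ! r"
  shows "\<exists>nu. domino_removal mu nu"
proof -
  define ys where "ys = mu[r := mu ! r - 2]"
  have ys: "row_length ys k = (if k = r then mu ! r - 2 else row_length mu k)" for k
    using r by (simp add: ys_def row_length_update)
  have r_row: "row_length mu r = mu ! r"
    using r by (simp add: row_length_def)
  have "domino_removal mu (filter (\<lambda>x. 0 < x) ys)"
  proof (rule domino_removal_by_row_lengths)
    show "sorted_wrt (\<ge>) ys"
    proof (rule sorted_if_row_length_antimono)
      fix i j :: nat assume "i < j"
      then show "row_length ys j \<le> row_length ys i"
        using row_length_antimono[OF mu, of i j] row_length_antimono[OF mu, of "Suc r" j]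
          row_length_antimono[OF mu, of i r] gap r_row
        unfolding ys by auto
    qed
    show "row_length ys k \<le> row_length mu k" for k
      using r_row by (simp add: ys)
    have "{(i, j). 1 \<le> i \<and> row_length ys (i - 1) < j \<and> j \<le> row_length mu (i - 1)}
        = {(Suc r, mu ! r - 1), (Suc r, Suc (mu ! r - 1))}"
      using gap r_row by (auto simp: ys split: if_splits)
    then show "is_domino {(i, j). 1 \<le> i \<and> row_length ys (i - 1) < j \<and> j \<le> row_length mu (i - 1)}"
      unfolding is_domino_def by blast
  qed
  then show ?thesis
    by blast
qed

lemma domino_removable_from_column:
  assumes mu: "is_partition mu" and r: "Suc r < length mu"
    and equal: "mu ! Suc r = mu ! r" and drop: "row_length mu (Suc (Suc r)) < mu ! r"
  shows "\<exists>nu. domino_removal mu nu"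
proof -
  define c where "c = mu ! r"
  have "0 < c"
    using mu r by (simp add: is_partition_def c_def)
  define ys where "ys = mu[r := c - 1, Suc r := c - 1]"
  have ys: "row_length ys k = (if k = r \<or> k = Suc r then c - 1 else row_length mu k)" for k
    using r by (simp add: ys_def row_length_update)
  have rows: "row_length mu r = c" "row_length mu (Suc r) = c"
    using r equal by (simp_all add: row_length_def c_def)
  have "domino_removal mu (filter (\<lambda>x. 0 < x) ys)"
  proof (rule domino_removal_by_row_lengths)
    show "sorted_wrt (\<ge>) ys"
    proof (rule sorted_if_row_length_antimono)
      fix i j :: nat assume "i < j"
      then show "row_length ys j \<le> row_length ys i"
        using row_length_antimono[OF mu, of i j] row_length_antimono[OF mu, of "Suc (Suc r)" j]
          row_length_antimono[OF mu, of i r] drop rows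
        unfolding ys c_def[symmetric] by auto
    qed
    show "row_length ys k \<le> row_length mu k" for k
      using rows by (simp add: ys)
    have "{(i, j). 1 \<le> i \<and> row_length ys (i - 1) < j \<and> j \<le> row_length mu (i - 1)}
        = {(Suc r, c), (Suc (Suc r), c)}"
      using rows \<open>0 < c\<close> by (auto simp: ys split: if_splits)
    then show "is_domino {(i, j). 1 \<le> i \<and> row_length ys (i - 1) < j \<and> j \<le> row_length mu (i - 1)}"
      unfolding is_domino_def by blast
  qed
  then show ?thesis
    by blast
qed

lemma row_length_step_if_no_domino_removal:
  assumes mu: "is_partition mu" and terminal: "\<nexists>nu. domino_removal mu nu"
    and r: "r < length mu" and below: "row_length mu (Suc r) = e"
    and below2: "0 < e \<Longrightarrow> row_length mu (Suc (Suc r)) = e - 1"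
  shows "mu ! r = Suc e"
proof -
  have r_row: "row_length mu r = mu ! r"
    using r by (simp add: row_length_def)
  have "e \<le> mu ! r"
    using row_length_antimono[OF mu, of r "Suc r"] below r_row by simp
  moreover have "\<not> e + 2 \<le> mu ! r"
  proof
    assume "e + 2 \<le> mu ! r"
    then have "\<exists>nu. domino_removal mu nu"
      using domino_removable_from_row[OF mu r] below by simp
    with terminal show False
      by blast
  qed
  moreover have "mu ! r \<noteq> e"
  proof
    assume equal: "mu ! r = e"
    show False
    proof (cases e)
      case 0
      then show False
        using mu r equal nth_mem[of r mu] by (auto simp: is_partition_def)
    next
      case (Suc e')
      then have "Suc r < length mu"
        using below by (auto simp: row_length_def split: if_splits)
      moreover have "mu ! Suc r = mu ! r"
        using below equal \<open>Suc r < length mu\<close> by (simp add: row_length_def)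
      ultimately show False
        using domino_removable_from_column[OF mu, of r] terminal below2 equal Suc by simp
    qed
  qed
  ultimately show ?thesis
    by simp
qed

text \<open>Reading the rows from the bottom: a gap of two allows a horizontal domino, and two equal
  rows above a shorter one allow a vertical domino.\<close>

lemma staircase_if_no_domino_removal:
  assumes mu: "is_partition mu" and terminal: "\<nexists>nu. domino_removal mu nu"
  shows "mu = staircase (length mu)"
proof -
  have from_bottom: "row_length mu (length mu - d) = d" if "d \<le> length mu" for d
    using that
  proof (induction d rule: less_induct)
    case (less d)
    show ?case
    proof (cases d)
      case (Suc e)
      define r where "r = length mu - d"
      have r: "r < length mu" "Suc r = length mu - e"
        using less.prems Suc by (auto simp: r_def)
      have "mu ! r = Suc e"
      proof (rule row_length_step_if_no_domino_removal[OF mu terminal r(1)])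
        show "row_length mu (Suc r) = e"
          using less.IH[of e] less.prems Suc r(2) by simp
        show "row_length mu (Suc (Suc r)) = e - 1" if "0 < e"
        proof -
          have "Suc (Suc r) = length mu - (e - 1)"
            using r(2) that less.prems Suc by arith
          then show ?thesis
            using less.IH[of "e - 1"] less.prems Suc that by simp
        qed
      qed
      then show ?thesis
        using r Suc by (simp add: row_length_def r_def)
    qed (simp add: row_length_def)
  qed
  show ?thesis
  proof (rule nth_equalityI)
    fix i assume "i < length mu"
    then show "mu ! i = staircase (length mu) ! i"
      using from_bottom[of "length mu - i"]
      by (simp add: row_length_def staircase_def rev_nth del: upt_Suc)
  qed simp
qed

lemma terminal_domino_removals_exist:
  "is_partition lam \<Longrightarrow> \<exists>kap. domino_removal\<^sup>*\<^sup>* lam kap \<and> (\<nexists>nu. domino_removal kap nu)"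
proof (induction "sum_list lam" arbitrary: lam rule: less_induct)
  case less
  show ?case
  proof (cases "\<exists>nu. domino_removal lam nu")
    case True
    then obtain nu where nu: "domino_removal lam nu"
      by blast
    then have "sum_list nu < sum_list lam" "is_partition nu"
      using domino_removal_invariants[OF nu] by (auto simp: domino_removal_def)
    then obtain kap where "domino_removal\<^sup>*\<^sup>* nu kap \<and> (\<nexists>nu. domino_removal kap nu)"
      using less by blast
    then show ?thesis
      using nu by (meson converse_rtranclp_into_rtranclp)
  qed blast
qed

lemma terminal_domino_removals_eq_staircase:
  assumes lam: "is_partition lam" and reach: "domino_removal\<^sup>*\<^sup>* lam kap"
    and terminal: "\<nexists>nu. domino_removal kap nu"
  shows "kap = staircase (nat (if 0 \<le> odd_excess lam then odd_excess lam else - odd_excess lam - 1))"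
proof -
  have "is_partition kap" "checkerboard_sum kap = checkerboard_sum lam"
    using rtranclp_domino_removal_invariants[OF reach lam] by auto
  then have staircase: "kap = staircase (length kap)"
    and "checkerboard_sum (staircase (length kap)) = checkerboard_sum lam"
    using staircase_if_no_domino_removal[OF _ terminal] by auto
  then have "int (length kap) = odd_excess lam \<or> int (length kap) = - odd_excess lam - 1"
    unfolding checkerboard_sum_eq_iff odd_excess_staircase by simp
  then have "length kap = nat (if 0 \<le> odd_excess lam then odd_excess lam else - odd_excess lam - 1)"
    by auto
  then show ?thesis
    using staircase by simp
qed

lemma two_core_eq_staircase:
  assumes lam: "is_partition lam"
  shows "two_core lam = staircase (nat (if 0 \<le> odd_excess lam then odd_excess lam else - odd_excess lam - 1))"
    and "domino_removal\<^sup>*\<^sup>* lam (two_core lam)"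
proof -
  let ?core = "staircase (nat (if 0 \<le> odd_excess lam then odd_excess lam else - odd_excess lam - 1))"
  obtain kap where "domino_removal\<^sup>*\<^sup>* lam kap" "\<nexists>nu. domino_removal kap nu"
    using terminal_domino_removals_exist[OF lam] by blast
  moreover from this have "kap = ?core"
    by (rule terminal_domino_removals_eq_staircase[OF lam])
  ultimately have reach: "domino_removal\<^sup>*\<^sup>* lam ?core" and terminal: "\<nexists>nu. domino_removal ?core nu"
    by simp_all
  show core: "two_core lam = ?core"
    unfolding two_core_def
  proof (rule the_equality)
    show "domino_removal\<^sup>*\<^sup>* lam ?core \<and> \<not> (\<exists>nu. domino_removal ?core nu)"
      using reach terminal by blast
  qed (use terminal_domino_removals_eq_staircase[OF lam] in blast)
  show "domino_removal\<^sup>*\<^sup>* lam (two_core lam)"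
    unfolding core by (rule reach)
qed

lemma double_sum_list_two_core:
  assumes "is_partition lam"
  shows "2 * int (sum_list (two_core lam)) = odd_excess lam * (odd_excess lam + 1)"
proof -
  define k where "k = nat (if 0 \<le> odd_excess lam then odd_excess lam else - odd_excess lam - 1)"
  have "2 * int (sum_list (staircase k)) = int k * (int k + 1)"
    using arg_cong[OF double_sum_staircase[of k], of int] by (simp add: algebra_simps)
  also have "\<dots> = odd_excess lam * (odd_excess lam + 1)"
    by (simp add: k_def algebra_simps)
  finally show ?thesis
    using two_core_eq_staircase(1)[OF assms] by (simp add: k_def)
qed

lemma sum_list_two_core:
  assumes "is_partition lam"
  shows "sum_list lam = sum_list (two_core lam) + 2 * quot_size lam"
  using rtranclp_domino_removal_invariants[OF two_core_eq_staircase(2)[OF assms] assms]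
  by (auto simp: quot_size_def elim!: evenE)


section \<open>Determinants of index functions\<close>

definition det_fn :: "nat \<Rightarrow> (nat \<Rightarrow> nat \<Rightarrow> 'a :: comm_ring_1) \<Rightarrow> 'a" where
  "det_fn n A = det (mat n n (\<lambda>(i, j). A i j))"

lemma det_fn_rows:
  "det_fn n A = (\<Sum>p | p permutes {..<n}. signof p * (\<Prod>i<n. A i (p i)))"
proof -
  have "det_fn n A = (\<Sum>p | p permutes {..<n}. signof p * (\<Prod>i<n. mat n n (\<lambda>(i, j). A i j) $$ (i, p i)))"
    unfolding det_fn_def by (subst det_def'[of _ n]) (simp_all add: atLeast0LessThan)
  also have "\<dots> = (\<Sum>p | p permutes {..<n}. signof p * (\<Prod>i<n. A i (p i)))"
  proof (rule sum.cong)
    fix p assume "p \<in> {p. p permutes {..<n}}"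
    then have "p i < n" if "i < n" for i
      using permutes_in_image that by fastforce
    then show "signof p * (\<Prod>i<n. mat n n (\<lambda>(i, j). A i j) $$ (i, p i)) = signof p * (\<Prod>i<n. A i (p i))"
      by (auto intro!: prod.cong)
  qed simp
  finally show ?thesis .
qed

lemma det_fn_transpose: "det_fn n (\<lambda>i j. A j i) = det_fn n A"
proof -
  have "det_fn n (\<lambda>i j. A j i) = det (transpose_mat (mat n n (\<lambda>(i, j). A i j)))"
    unfolding det_fn_def by (rule arg_cong[where f = det], rule eq_matI) simp_all
  also have "\<dots> = det_fn n A"
    unfolding det_fn_def by (rule det_transpose[of _ n]) simp
  finally show ?thesis .
qed

lemma det_fn_columns:
  "det_fn n A = (\<Sum>p | p permutes {..<n}. signof p * (\<Prod>j<n. A (p j) j))"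
  using det_fn_rows[of n "\<lambda>i j. A j i"] det_fn_transpose[of n "\<lambda>i j. A j i"] by simp

lemma det_fn_cong:
  "(\<And>i j. i < n \<Longrightarrow> j < n \<Longrightarrow> A i j = B i j) \<Longrightarrow> det_fn n A = det_fn n B"
  unfolding det_fn_def by (rule arg_cong[where f = det]) auto

lemma det_fn_0 [simp]: "det_fn 0 A = 1"
  by (simp add: det_fn_def)

lemma det_fn_identical_columns:
  assumes "j < n" "k < n" "j \<noteq> k" "\<And>i. i < n \<Longrightarrow> A i j = A i k"
  shows "det_fn n A = 0"
  unfolding det_fn_def by (rule det_identical_columns[of _ n j k]) (use assms in auto)

lemma det_fn_identical_rows:
  assumes "j < n" "k < n" "j \<noteq> k" "\<And>i. i < n \<Longrightarrow> A j i = A k i"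
  shows "det_fn n A = 0"
  unfolding det_fn_def by (rule det_identical_rows[of _ n j k]) (use assms in auto)

lemma det_fn_row_linear:
  assumes "r < n"
  shows "det_fn n (\<lambda>i j. if i = r then a * u j + b * v j else A i j)
    = a * det_fn n (\<lambda>i j. if i = r then u j else A i j) + b * det_fn n (\<lambda>i j. if i = r then v j else A i j)"
proof -
  have remove_r: "(\<Prod>i<n. if i = r then f i else g i) = f r * (\<Prod>i\<in>{..<n} - {r}. g i)"
    for f g :: "nat \<Rightarrow> 'a"
    using assms by (simp add: prod.remove)
  have "(\<Prod>i<n. if i = r then a * u (p i) + b * v (p i) else A i (p i)) =
      a * (\<Prod>i<n. if i = r then u (p i) else A i (p i)) + b * (\<Prod>i<n. if i = r then v (p i) else A i (p i))"
    for p :: "nat \<Rightarrow> nat"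
    unfolding remove_r by (simp add: algebra_simps)
  then show ?thesis
    unfolding det_fn_rows by (simp add: sum_distrib_left sum.distrib[symmetric] algebra_simps)
qed

lemma det_fn_row_add:
  "r < n \<Longrightarrow> det_fn n (\<lambda>i j. if i = r then u j + v j else A i j)
    = det_fn n (\<lambda>i j. if i = r then u j else A i j) + det_fn n (\<lambda>i j. if i = r then v j else A i j)"
  using det_fn_row_linear[of r n 1 u 1 v A] by (simp cong: if_cong)

lemma det_fn_row_scale:
  "r < n \<Longrightarrow> det_fn n (\<lambda>i j. if i = r then a * u j else A i j) = a * det_fn n (\<lambda>i j. if i = r then u j else A i j)"
  using det_fn_row_linear[of r n a u 0 u A] by (simp cong: if_cong)

lemma det_fn_add_row_multiple:
  assumes "r < n" "s < n" "r \<noteq> s"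
  shows "det_fn n (\<lambda>i j. if i = r then A r j + a * A s j else A i j) = det_fn n A"
proof -
  have "det_fn n (\<lambda>i j. if i = r then A s j else A i j) = 0"
    by (rule det_fn_identical_rows[of r n s]) (use assms in auto)
  moreover have "det_fn n (\<lambda>i j. if i = r then A r j else A i j) = det_fn n A"
    by (rule det_fn_cong) simp
  ultimately show ?thesis
    using det_fn_row_linear[of r n 1 "A r" a "A s" A] assms(1) by (simp cong: if_cong)
qed

lemma det_fn_scale_columns: "det_fn n (\<lambda>i j. c j * A i j) = (\<Prod>j<n. c j) * det_fn n A"
  unfolding det_fn_columns by (simp add: prod.distrib sum_distrib_left algebra_simps)

lemma det_fn_scale_column:
  assumes "j < n"
  shows "det_fn n (\<lambda>i k. if k = j then c * A i k else A i k) = c * det_fn n A"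
proof -
  have "det_fn n (\<lambda>i k. if k = j then c * A i k else A i k) = det_fn n (\<lambda>i k. (if k = j then c else 1) * A i k)"
    by (rule det_fn_cong) simp
  also have "\<dots> = c * det_fn n A"
    using assms by (simp add: det_fn_scale_columns prod.delta)
  finally show ?thesis .
qed

text \<open>In the Leibniz expansion, both sides take exactly one factor of each product from B.\<close>

lemma sum_det_fn_replace_columns_eq_rows:
  "(\<Sum>j<n. det_fn n (\<lambda>i k. if k = j then B i k else A i k))
    = (\<Sum>r<n. det_fn n (\<lambda>i k. if i = r then B i k else A i k))"
proof -
  have entry: "(\<Sum>j<n. \<Prod>i<n. if p i = j then B i (p i) else A i (p i)) =
      (\<Sum>r<n. \<Prod>i<n. if i = r then B i (p i) else A i (p i))" if p: "p permutes {..<n}" for p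
  proof -
    have "(\<Sum>j<n. \<Prod>i<n. if p i = j then B i (p i) else A i (p i)) =
        (\<Sum>r<n. \<Prod>i<n. if p i = p r then B i (p i) else A i (p i))"
      using permutes_imp_bij[OF p] by (rule sum.reindex_bij_betw[symmetric])
    also have "\<dots> = (\<Sum>r<n. \<Prod>i<n. if i = r then B i (p i) else A i (p i))"
      using permutes_inj[OF p] by (intro sum.cong prod.cong) (auto simp: inj_eq)
    finally show ?thesis .
  qed
  let ?P = "{p. p permutes {..<n}}"
  have "(\<Sum>j<n. det_fn n (\<lambda>i k. if k = j then B i k else A i k))
      = (\<Sum>p\<in>?P. signof p * (\<Sum>j<n. \<Prod>i<n. if p i = j then B i (p i) else A i (p i)))"
    unfolding det_fn_rows by (subst sum.swap) (simp add: sum_distrib_left)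
  also have "\<dots> = (\<Sum>p\<in>?P. signof p * (\<Sum>r<n. \<Prod>i<n. if i = r then B i (p i) else A i (p i)))"
    by (intro sum.cong refl) (simp add: entry)
  also have "\<dots> = (\<Sum>r<n. det_fn n (\<lambda>i k. if i = r then B i k else A i k))"
    unfolding det_fn_rows by (subst sum.swap) (simp add: sum_distrib_left)
  finally show ?thesis .
qed

lemma sum_det_fn_scale_rows:
  "(\<Sum>r<n. det_fn n (\<lambda>i k. if i = r then c k * A i k else A i k)) = (\<Sum>k<n. c k) * det_fn n A"
proof -
  have "det_fn n (\<lambda>i k. if k = j then c k * A i k else A i k) = c j * det_fn n A" if "j < n" for j
  proof -
    have "det_fn n (\<lambda>i k. if k = j then c k * A i k else A i k)
        = det_fn n (\<lambda>i k. if k = j then c j * A i k else A i k)"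
      by (rule det_fn_cong) simp
    then show ?thesis
      using det_fn_scale_column[OF that] by simp
  qed
  then show ?thesis
    by (simp flip: sum_det_fn_replace_columns_eq_rows add: sum_distrib_right)
qed

lemma det_fn_expand_first:
  assumes "B 0 0 = 1" "\<And>i. 0 < i \<Longrightarrow> B i 0 = 0"
  shows "det_fn (Suc n) B = det_fn n (\<lambda>i j. B (Suc i) (Suc j))"
proof -
  define M where "M = mat (Suc n) (Suc n) (\<lambda>(i, j). B i j)"
  have M: "M \<in> carrier_mat (Suc n) (Suc n)"
    by (simp add: M_def)
  have "det M = (\<Sum>i<Suc n. M $$ (i, 0) * cofactor M i 0)"
    by (rule laplace_expansion_column[OF M]) simp
  also have "\<dots> = cofactor M 0 0"
    using assms by (subst sum.lessThan_Suc_shift) (simp add: M_def)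
  also have "\<dots> = det (mat_delete M 0 0)"
    by (simp add: cofactor_def)
  also have "mat_delete M 0 0 = mat n n (\<lambda>(i, j). B (Suc i) (Suc j))"
    unfolding mat_delete_def M_def by (rule eq_matI) simp_all
  finally show ?thesis
    by (simp add: det_fn_def M_def)
qed

lemma det_fn_subtract_previous_rows:
  assumes "0 < k" "k \<le> n"
  shows "det_fn n (\<lambda>i j. if k \<le> i then A i j - c i * A (i - 1) j else A i j) = det_fn n A"
  using assms(2,1)
proof (induction k rule: inc_induct)
  case (step k)
  define A' where "A' = (\<lambda>i j. if Suc k \<le> i then A i j - c i * A (i - 1) j else A i j)"
  have "det_fn n (\<lambda>i j. if k \<le> i then A i j - c i * A (i - 1) j else A i j)
      = det_fn n (\<lambda>i j. if i = k then A' k j + (- c k) * A' (k - 1) j else A' i j)"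
    by (rule det_fn_cong) (use step in \<open>auto simp: A'_def\<close>)
  also have "\<dots> = det_fn n A'"
    by (rule det_fn_add_row_multiple) (use step in auto)
  finally show ?case
    using step by (simp add: A'_def)
qed (auto intro: det_fn_cong)


section \<open>Falling factorials\<close>

definition ffact :: "'a :: comm_ring_1 \<Rightarrow> nat \<Rightarrow> 'a" where
  "ffact x i = (\<Prod>t<i. x - of_nat t)"

lemma ffact_0 [simp]: "ffact x 0 = 1"
  by (simp add: ffact_def)

lemma ffact_Suc: "ffact x (Suc i) = ffact x i * (x - of_nat i)"
  by (simp add: ffact_def)

lemma ffact_of_nat_eq_0: "k < i \<Longrightarrow> ffact (of_nat k) i = 0"
  unfolding ffact_def by (rule prod_zero) auto

lemma ffact_Suc_shift: "ffact x (Suc i) = x * ffact (x - 1) i"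
  by (induction i) (simp_all add: ffact_Suc algebra_simps)

lemma ffact_mult_self: "x * ffact x r = ffact x (Suc r) + of_nat r * ffact x r"
  by (simp add: ffact_Suc algebra_simps)

lemma ffact_mult_self_pred:
  "x * (x - 1) * ffact x r
    = ffact x (Suc (Suc r)) + 2 * of_nat r * ffact x (Suc r) + of_nat r * (of_nat r - 1) * ffact x r"
  by (simp add: ffact_Suc algebra_simps)

text \<open>Subtracting (x 0 - (i - 1)) times row i - 1 from row i, bottom-up, turns row i into
  (x j - x 0) times the falling factorial of degree i - 1.\<close>

lemma det_fn_ffact_Vandermonde:
  "det_fn n (\<lambda>i j. ffact (x j) i) = (\<Prod>j<n. \<Prod>i<j. x j - x i)"
proof (induction n arbitrary: x)
  case (Suc n)
  define c where "c i = x 0 - of_nat (i - 1)" for i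
  have "det_fn (Suc n) (\<lambda>i j. ffact (x j) i) =
      det_fn (Suc n) (\<lambda>i j. if 1 \<le> i then ffact (x j) i - c i * ffact (x j) (i - 1) else ffact (x j) i)"
    by (rule det_fn_subtract_previous_rows[symmetric]) simp_all
  also have "\<dots> = det_fn (Suc n) (\<lambda>i j. if i = 0 then 1 else (x j - x 0) * ffact (x j) (i - 1))"
  proof (rule det_fn_cong)
    fix i j
    show "(if 1 \<le> i then ffact (x j) i - c i * ffact (x j) (i - 1) else ffact (x j) i)
        = (if i = 0 then 1 else (x j - x 0) * ffact (x j) (i - 1))"
      by (cases i) (simp_all add: c_def ffact_Suc algebra_simps)
  qed
  also have "\<dots> = det_fn n (\<lambda>i j. (x (Suc j) - x 0) * ffact (x (Suc j)) i)"
    by (subst det_fn_expand_first) simp_all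
  also have "\<dots> = (\<Prod>j<n. x (Suc j) - x 0) * (\<Prod>j<n. \<Prod>i<j. x (Suc j) - x (Suc i))"
    using Suc.IH[of "\<lambda>j. x (Suc j)"] by (simp add: det_fn_scale_columns)
  also have "\<dots> = (\<Prod>j<Suc n. \<Prod>i<j. x j - x i)"
    by (simp add: prod.lessThan_Suc_shift prod.distrib del: prod.lessThan_Suc)
  finally show ?case .
qed simp

lemma det_fn_ffact_raise_row_eq_0:
  assumes "Suc r < n"
  shows "det_fn n (\<lambda>i k. if i = r then ffact (x k) (Suc r) else ffact (x k) i) = 0"
  by (rule det_fn_identical_rows[of r n "Suc r"]) (use assms in auto)

lemma sum_det_fn_ffact_raise_rows:
  assumes "0 < n"
  shows "(\<Sum>r<n. c r * det_fn n (\<lambda>i k. if i = r then ffact (x k) (Suc r) else ffact (x k) i))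
    = c (n - 1) * det_fn n (\<lambda>i k. if i = n - 1 then ffact (x k) n else ffact (x k) i)"
proof -
  obtain m where n: "n = Suc m"
    using assms by (cases n) auto
  have "(\<Sum>r<m. c r * det_fn n (\<lambda>i k. if i = r then ffact (x k) (Suc r) else ffact (x k) i)) = 0"
    using det_fn_ffact_raise_row_eq_0[of _ n x] n by (intro sum.neutral) simp
  then show ?thesis
    using n by (simp cong: if_cong)
qed

lemma det_fn_ffact_mult_row:
  assumes "r < n"
  shows "det_fn n (\<lambda>i k. if i = r then x k * ffact (x k) i else ffact (x k) i)
    = det_fn n (\<lambda>i k. if i = r then ffact (x k) (Suc r) else ffact (x k) i)
      + of_nat r * det_fn n (\<lambda>i k. ffact (x k) i)"
proof -
  have "det_fn n (\<lambda>i k. if i = r then x k * ffact (x k) i else ffact (x k) i)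
      = det_fn n (\<lambda>i k. if i = r then ffact (x k) (Suc r) + of_nat r * ffact (x k) r else ffact (x k) i)"
    by (rule det_fn_cong) (simp add: ffact_mult_self)
  also have "det_fn n (\<lambda>i k. if i = r then ffact (x k) r else ffact (x k) i) = det_fn n (\<lambda>i k. ffact (x k) i)"
    by (rule det_fn_cong) simp
  ultimately show ?thesis
    by (simp add: det_fn_row_add[OF assms] det_fn_row_scale[OF assms])
qed

lemma det_fn_ffact_mult_pred_row:
  assumes "r < n"
  shows "det_fn n (\<lambda>i k. if i = r then x k * (x k - 1) * ffact (x k) i else ffact (x k) i)
    = det_fn n (\<lambda>i k. if i = r then ffact (x k) (Suc (Suc r)) else ffact (x k) i)
      + 2 * of_nat r * det_fn n (\<lambda>i k. if i = r then ffact (x k) (Suc r) else ffact (x k) i)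
      + of_nat r * (of_nat r - 1) * det_fn n (\<lambda>i k. ffact (x k) i)"
proof -
  have "det_fn n (\<lambda>i k. if i = r then x k * (x k - 1) * ffact (x k) i else ffact (x k) i)
      = det_fn n (\<lambda>i k. if i = r then ffact (x k) (Suc (Suc r)) + (2 * of_nat r * ffact (x k) (Suc r)
          + of_nat r * (of_nat r - 1) * ffact (x k) r) else ffact (x k) i)"
    by (rule det_fn_cong) (simp add: ffact_mult_self_pred add.assoc)
  also have "det_fn n (\<lambda>i k. if i = r then ffact (x k) r else ffact (x k) i) = det_fn n (\<lambda>i k. ffact (x k) i)"
    by (rule det_fn_cong) simp
  ultimately show ?thesis
    by (simp add: det_fn_row_add[OF assms] det_fn_row_scale[OF assms] add.assoc)
qed

lemma det_fn_ffact_raise_last_row: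
  fixes x :: "nat \<Rightarrow> 'a :: comm_ring_1"
  assumes "0 < n"
  shows "det_fn n (\<lambda>i k. if i = n - 1 then ffact (x k) n else ffact (x k) i)
    = ((\<Sum>k<n. x k) - (\<Sum>i<n. of_nat i)) * det_fn n (\<lambda>i k. ffact (x k) i)"
proof -
  have "(\<Sum>k<n. x k) * det_fn n (\<lambda>i k. ffact (x k) i)
      = (\<Sum>r<n. det_fn n (\<lambda>i k. if i = r then x k * ffact (x k) i else ffact (x k) i))"
    by (rule sum_det_fn_scale_rows[symmetric])
  also have "\<dots> = (\<Sum>r<n. 1 * det_fn n (\<lambda>i k. if i = r then ffact (x k) (Suc r) else ffact (x k) i))
      + (\<Sum>r<n. of_nat r) * det_fn n (\<lambda>i k. ffact (x k) i)"
    by (simp add: det_fn_ffact_mult_row sum.distrib sum_distrib_right)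
  finally show ?thesis
    unfolding sum_det_fn_ffact_raise_rows[OF assms] by (simp add: algebra_simps)
qed

text \<open>Multiplying row r by x k (x k - 1) and summing over r amounts to multiplying the columns;
  expanding in falling factorials, a row raised by one duplicates the next row unless it is
  the last one.\<close>

lemma sum_det_fn_ffact_shift_column:
  fixes x :: "nat \<Rightarrow> 'a :: comm_ring_1"
  assumes "0 < n"
  shows "(\<Sum>j<n. det_fn n (\<lambda>i k. if k = j then ffact (x k) (Suc (Suc i)) else ffact (x k) i))
    = ((\<Sum>k<n. x k * (x k - 1)) - 2 * of_nat (n - 1) * ((\<Sum>k<n. x k) - (\<Sum>i<n. of_nat i))
       - (\<Sum>i<n. of_nat i * (of_nat i - 1))) * det_fn n (\<lambda>i k. ffact (x k) i)"
proof -
  let ?A = "\<lambda>i k. ffact (x k) i"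
  have columns: "(\<Sum>j<n. det_fn n (\<lambda>i k. if k = j then ffact (x k) (Suc (Suc i)) else ?A i k))
      = (\<Sum>r<n. det_fn n (\<lambda>i k. if i = r then ffact (x k) (Suc (Suc r)) else ?A i k))"
    unfolding sum_det_fn_replace_columns_eq_rows by (intro sum.cong refl det_fn_cong) simp
  have "(\<Sum>k<n. x k * (x k - 1)) * det_fn n ?A
      = (\<Sum>r<n. det_fn n (\<lambda>i k. if i = r then x k * (x k - 1) * ?A i k else ?A i k))"
    by (rule sum_det_fn_scale_rows[symmetric])
  also have "\<dots> = (\<Sum>r<n. det_fn n (\<lambda>i k. if i = r then ffact (x k) (Suc (Suc r)) else ?A i k))
      + (\<Sum>r<n. (2 * of_nat r) * det_fn n (\<lambda>i k. if i = r then ffact (x k) (Suc r) else ?A i k))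
      + (\<Sum>r<n. of_nat r * (of_nat r - 1)) * det_fn n ?A"
    by (simp add: det_fn_ffact_mult_pred_row sum.distrib sum_distrib_right)
  finally show ?thesis
    unfolding columns sum_det_fn_ffact_raise_rows[OF assms] det_fn_ffact_raise_last_row[OF assms]
    using assms by (simp add: algebra_simps)
qed


section \<open>Wronskians\<close>

lemma prod_monom: "finite S \<Longrightarrow> (\<Prod>j\<in>S. monom (a j) (e j)) = monom (\<Prod>j\<in>S. a j) (\<Sum>j\<in>S. e j)"
  by (induction S rule: finite_induct) (simp_all add: mult_monom)

lemma higher_pderiv_monom_ffact:
  "(pderiv ^^ i) (monom c k) = monom (c * ffact (of_nat k) i) (k - i)"
proof (induction i)
  case (Suc i)
  show ?case
  proof (cases "i \<le> k")
    case True
    then show ?thesis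
      using Suc by (simp add: pderiv_monom ffact_Suc of_nat_diff algebra_simps)
  next
    case False
    then show ?thesis
      using Suc by (simp add: pderiv_monom ffact_of_nat_eq_0)
  qed
qed simp

lemma det_fn_higher_pderiv_monom:
  "det_fn l (\<lambda>i j. (pderiv ^^ i) (monom 1 (k j) :: 'a :: idom poly))
    = monom (det_fn l (\<lambda>i j. ffact (of_nat (k j)) i)) ((\<Sum>j<l. k j) - (\<Sum>i<l. i))"
proof -
  let ?E = "(\<Sum>j<l. k j) - (\<Sum>i<l. i)"
  have summand: "signof p * (\<Prod>j<l. (pderiv ^^ p j) (monom 1 (k j) :: 'a poly))
      = monom (signof p * (\<Prod>j<l. ffact (of_nat (k j)) (p j))) ?E" if p: "p permutes {..<l}" for p
  proof -
    have "signof p * (\<Prod>j<l. (pderiv ^^ p j) (monom 1 (k j) :: 'a poly))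
        = monom (signof p * (\<Prod>j<l. ffact (of_nat (k j)) (p j))) (\<Sum>j<l. k j - p j)"
      by (simp add: higher_pderiv_monom_ffact prod_monom of_int_poly smult_monom flip: monom_0)
        (simp add: mult_monom)
    also have "\<dots> = monom (signof p * (\<Prod>j<l. ffact (of_nat (k j)) (p j))) ?E"
    proof (cases "\<forall>j<l. p j \<le> k j")
      case True
      have "(\<Sum>j<l. k j - p j) = (\<Sum>j<l. k j) - (\<Sum>j<l. p j)"
        using True by (intro sum_subtractf_nat) auto
      also have "(\<Sum>j<l. p j) = (\<Sum>i<l. i)"
        using permutes_imp_bij[OF p] by (rule sum.reindex_bij_betw)
      finally show ?thesis
        by simp
    next
      case False
      then obtain j where "j < l" "k j < p j"
        by auto
      then have "(\<Prod>j<l. ffact (of_nat (k j) :: 'a) (p j)) = 0"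
        using ffact_of_nat_eq_0 by (intro prod_zero) auto
      then show ?thesis
        by (simp del: prod_zero_iff)
    qed
    finally show ?thesis .
  qed
  have "det_fn l (\<lambda>i j. (pderiv ^^ i) (monom 1 (k j) :: 'a poly))
      = (\<Sum>p | p permutes {..<l}. monom (signof p * (\<Prod>j<l. ffact (of_nat (k j)) (p j))) ?E)"
    unfolding det_fn_columns by (rule sum.cong) (simp_all add: summand)
  also have "\<dots> = monom (det_fn l (\<lambda>i j. ffact (of_nat (k j)) i)) ?E"
    by (simp add: det_fn_columns monom_sum)
  finally show ?thesis .
qed

lemma det_fn_sum_columns:
  assumes "finite S"
  shows "det_fn n (\<lambda>i j. \<Sum>s\<in>S. c j s * B s i j)
    = (\<Sum>\<kappa>\<in>{..<n} \<rightarrow>\<^sub>E S. (\<Prod>j<n. c j (\<kappa> j)) * det_fn n (\<lambda>i j. B (\<kappa> j) i j))"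
proof -
  let ?P = "{p. p permutes {..<n}}"
  have "det_fn n (\<lambda>i j. \<Sum>s\<in>S. c j s * B s i j)
      = (\<Sum>p\<in>?P. signof p * (\<Sum>\<kappa>\<in>{..<n} \<rightarrow>\<^sub>E S. \<Prod>j<n. c j (\<kappa> j) * B (\<kappa> j) (p j) j))"
    unfolding det_fn_columns using assms by (simp add: prod_sum_PiE)
  also have "\<dots> = (\<Sum>p\<in>?P. \<Sum>\<kappa>\<in>{..<n} \<rightarrow>\<^sub>E S.
      signof p * ((\<Prod>j<n. c j (\<kappa> j)) * (\<Prod>j<n. B (\<kappa> j) (p j) j)))"
    by (simp add: sum_distrib_left prod.distrib)
  also have "\<dots> = (\<Sum>\<kappa>\<in>{..<n} \<rightarrow>\<^sub>E S. \<Sum>p\<in>?P.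
      signof p * ((\<Prod>j<n. c j (\<kappa> j)) * (\<Prod>j<n. B (\<kappa> j) (p j) j)))"
    by (rule sum.swap)
  also have "\<dots> = (\<Sum>\<kappa>\<in>{..<n} \<rightarrow>\<^sub>E S. (\<Prod>j<n. c j (\<kappa> j)) * (\<Sum>p\<in>?P. signof p * (\<Prod>j<n. B (\<kappa> j) (p j) j)))"
    by (simp add: sum_distrib_left algebra_simps)
  finally show ?thesis
    by (simp add: det_fn_columns)
qed

lemma wronskian_det_fn: "wronskian fs = det_fn (length fs) (\<lambda>i j. (pderiv ^^ i) (fs ! j))"
  unfolding wronskian_def det_fn_rows by simp

lemma coeff_wronskian:
  assumes "\<And>f. f \<in> set fs \<Longrightarrow> degree f \<le> M"
  shows "coeff (wronskian fs) m = (\<Sum>\<kappa>\<in>{..<length fs} \<rightarrow>\<^sub>E {..M}.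
      if (\<Sum>j<length fs. \<kappa> j) - (\<Sum>i<length fs. i) = m
      then (\<Prod>j<length fs. coeff (fs ! j) (\<kappa> j)) * det_fn (length fs) (\<lambda>i j. ffact (of_nat (\<kappa> j)) i)
      else 0)"
proof -
  define l where "l = length fs"
  have column: "(pderiv ^^ i) (fs ! j) = (\<Sum>s\<le>M. monom (coeff (fs ! j) s) 0 * (pderiv ^^ i) (monom 1 s))"
    if "j < l" for i j
  proof -
    have "(pderiv ^^ i) (fs ! j) = (\<Sum>s\<le>M. (pderiv ^^ i) (monom (coeff (fs ! j) s) s))"
      unfolding higher_pderiv_sum[symmetric]
      using poly_as_sum_of_monoms'[of "fs ! j" M] assms[of "fs ! j"] that by (simp add: l_def)
    then show ?thesis
      by (simp add: higher_pderiv_monom_ffact mult_monom)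
  qed
  have "wronskian fs = det_fn l (\<lambda>i j. \<Sum>s\<le>M. monom (coeff (fs ! j) s) 0 * (pderiv ^^ i) (monom 1 s))"
    unfolding wronskian_det_fn l_def[symmetric] by (rule det_fn_cong) (simp add: column)
  also have "\<dots> = (\<Sum>\<kappa>\<in>{..<l} \<rightarrow>\<^sub>E {..M}. (\<Prod>j<l. monom (coeff (fs ! j) (\<kappa> j)) 0)
      * det_fn l (\<lambda>i j. (pderiv ^^ i) (monom 1 (\<kappa> j))))"
    by (rule det_fn_sum_columns[where c = "\<lambda>j s. monom (coeff (fs ! j) s) 0"
          and B = "\<lambda>s i j. (pderiv ^^ i) (monom 1 s)"]) simp
  finally show ?thesis
    by (simp add: l_def coeff_sum prod_monom det_fn_higher_pderiv_monom mult_monom coeff_monom)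
qed


section \<open>Hermite polynomials\<close>

lemma x_mult_eq_pCons: "[:0, 1:] * p = pCons 0 (p :: real poly)"
  by (simp add: mult_pCons_left)

lemma coeff_hermite_eq_0: "n < k \<or> odd (n + k) \<Longrightarrow> coeff (hermite n) k = 0"
proof (induction n arbitrary: k rule: hermite.induct)
  case 1
  then show ?case
    by (cases k) simp_all
next
  case 2
  then show ?case
    by (auto simp: coeff_pCons split: nat.splits)
next
  case (3 n)
  show ?case
  proof (cases k)
    case 0
    have "coeff (hermite n) 0 = 0"
      by (rule 3) (use 3(3) 0 in simp)
    then show ?thesis
      using 0 by (simp add: x_mult_eq_pCons)
  next
    case (Suc k')
    have "coeff (hermite (Suc n)) k' = 0" "coeff (hermite n) (Suc k') = 0"
      by (rule 3; use 3(3) Suc in auto)+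
    then show ?thesis
      using Suc by (simp add: x_mult_eq_pCons)
  qed
qed

lemma degree_hermite: "degree (hermite n) \<le> n"
  by (rule degree_le) (simp add: coeff_hermite_eq_0)

lemma coeff_hermite_self: "coeff (hermite n) n = 1"
  by (induction n rule: hermite.induct) (simp_all add: x_mult_eq_pCons coeff_hermite_eq_0)

lemma coeff_hermite_subleading:
  assumes "2 \<le> n"
  shows "coeff (hermite n) (n - 2) = - (real n * (real n - 1) / 2)"
proof -
  have sub: "coeff (hermite (Suc (Suc k))) k = - (real (Suc (Suc k)) * real (Suc k) / 2)" for k
  proof (induction k)
    case (Suc k)
    have "coeff (hermite (Suc (Suc (Suc k)))) (Suc k)
        = coeff (hermite (Suc (Suc k))) k - real (Suc (Suc k)) * coeff (hermite (Suc k)) (Suc k)"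
      by (simp add: x_mult_eq_pCons)
    then show ?case
      using Suc.IH by (simp add: coeff_hermite_self field_simps)
  qed (simp add: x_mult_eq_pCons)
  obtain k where "n = Suc (Suc k)"
    using assms by (metis add_2_eq_Suc le_Suc_ex)
  then show ?thesis
    using sub[of k] by simp
qed


section \<open>The support of the Wronskian of Hermite polynomials\<close>

lemma card_times_pred_le_double_sum:
  fixes T :: "nat set"
  assumes "finite T"
  shows "card T * (card T - 1) \<le> 2 * \<Sum>T"
  using assms
proof (induction "card T" arbitrary: T)
  case (Suc c)
  define M where "M = Max T"
  have "T \<noteq> {}"
    using Suc.hyps(2) by auto
  then have M: "M \<in> T" "\<And>t. t \<in> T \<Longrightarrow> t \<le> M"
    using Suc.prems by (simp_all add: M_def)
  then have "T \<subseteq> {..M}"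
    by auto
  then have "c \<le> M"
    using card_mono[of "{..M}" T] Suc.hyps(2) by simp
  have "card (T - {M}) = c"
    using Suc.hyps(2) Suc.prems M(1) by simp
  then have "c * (c - 1) \<le> 2 * \<Sum>(T - {M})"
    using Suc.hyps(1)[of "T - {M}"] Suc.prems by simp
  moreover have "\<Sum>T = M + \<Sum>(T - {M})"
    using sum.remove[OF Suc.prems M(1), of "\<lambda>x. x"] by simp
  ultimately show ?case
    using \<open>c \<le> M\<close> Suc.hyps(2)[symmetric] by (cases c) (auto simp: algebra_simps)
qed simp

lemma sum_inj_on_same_parity_ge:
  fixes \<kappa> :: "'a \<Rightarrow> nat"
  assumes "finite S" and inj: "inj_on \<kappa> S" and parity: "\<And>j. j \<in> S \<Longrightarrow> \<kappa> j mod 2 = r"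
  shows "card S * (card S - 1) + r * card S \<le> (\<Sum>j\<in>S. \<kappa> j)"
proof -
  define h where "h j = \<kappa> j div 2" for j
  have \<kappa>: "\<kappa> j = 2 * h j + r" if "j \<in> S" for j
    using parity[OF that] unfolding h_def by presburger
  have "inj_on h S"
    using inj by (auto simp: inj_on_def \<kappa>)
  then have "card (h ` S) = card S" "\<Sum>(h ` S) = (\<Sum>j\<in>S. h j)"
    by (simp_all add: card_image sum.reindex)
  moreover have "(\<Sum>j\<in>S. \<kappa> j) = 2 * (\<Sum>j\<in>S. h j) + r * card S"
    by (simp add: \<kappa> sum.distrib sum_distrib_left)
  ultimately show ?thesis
    using card_times_pred_le_double_sum[of "h ` S"] assms(1) by simp
qed

lemma two_core_size_parity_counts:
  assumes lam: "is_partition lam"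
  defines "a \<equiv> card {j. j < length lam \<and> even (degvec lam ! j)}"
    and "b \<equiv> card {j. j < length lam \<and> odd (degvec lam ! j)}"
  shows "sum_list (two_core lam) + (\<Sum>i<length lam. i) = a * (a - 1) + b * b"
proof -
  define l where "l = length lam"
  have "card ({j. j < l \<and> even (degvec lam ! j)} \<union> {j. j < l \<and> odd (degvec lam ! j)}) = a + b"
    unfolding a_def b_def l_def by (rule card_Un_disjoint) auto
  moreover have "{j. j < l \<and> even (degvec lam ! j)} \<union> {j. j < l \<and> odd (degvec lam ! j)} = {..<l}"
    by auto
  ultimately have "l = a + b"
    by simp
  have "odd_excess lam = int b - int a"
    by (simp add: odd_excess_def length_filter_conv_card a_def b_def)
  then have "2 * int (sum_list (two_core lam)) = (int b - int a) * (int b - int a + 1)"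
    using double_sum_list_two_core[OF lam] by simp
  moreover have "2 * int (\<Sum>i<l. i) = int l * (int l - 1)"
    using double_sum_lessThan[of l, where 'a = int] by (simp add: of_nat_sum)
  ultimately have "2 * (int (sum_list (two_core lam)) + int (\<Sum>i<l. i)) = 2 * (int a * (int a - 1) + int b * int b)"
    using \<open>l = a + b\<close> by (simp add: algebra_simps)
  then have "int (sum_list (two_core lam) + (\<Sum>i<l. i)) = int (a * (a - 1) + b * b)"
    by (cases a) (simp_all add: algebra_simps)
  then show ?thesis
    unfolding l_def by linarith
qed

text \<open>With a even and b odd degrees, distinct exponents of the same parities sum to at least
  a (a - 1) + b * b.\<close>

lemma two_core_size_le_sum:
  assumes lam: "is_partition lam"
    and parity: "\<And>j. j < length lam \<Longrightarrow> even (degvec lam ! j + \<kappa> j)"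
    and inj: "inj_on \<kappa> {..<length lam}"
  shows "sum_list (two_core lam) + (\<Sum>i<length lam. i) \<le> (\<Sum>j<length lam. \<kappa> j)"
proof -
  define l where "l = length lam"
  define Ev where "Ev = {j. j < l \<and> even (degvec lam ! j)}"
  define Od where "Od = {j. j < l \<and> odd (degvec lam ! j)}"
  have parts: "{..<l} = Ev \<union> Od" "Ev \<inter> Od = {}" "finite Ev" "finite Od"
    by (auto simp: Ev_def Od_def)
  have "card Ev * (card Ev - 1) + 0 * card Ev \<le> (\<Sum>j\<in>Ev. \<kappa> j)"
    by (rule sum_inj_on_same_parity_ge) (use inj parity in \<open>auto simp: Ev_def l_def intro: inj_on_subset\<close>)
  moreover have "card Od * (card Od - 1) + 1 * card Od \<le> (\<Sum>j\<in>Od. \<kappa> j)"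
    by (rule sum_inj_on_same_parity_ge)
      (use inj parity in \<open>auto simp: Od_def l_def intro: inj_on_subset, presburger\<close>)
  moreover have "(\<Sum>j<l. \<kappa> j) = (\<Sum>j\<in>Ev. \<kappa> j) + (\<Sum>j\<in>Od. \<kappa> j)"
    unfolding parts(1) using parts(2-4) by (simp add: sum.union_disjoint)
  ultimately have "card Ev * (card Ev - 1) + card Od * card Od \<le> (\<Sum>j<l. \<kappa> j)"
    by (cases "card Od") auto
  then show ?thesis
    using two_core_size_parity_counts[OF lam] by (simp add: Ev_def Od_def l_def)
qed

definition hermite_wronskian :: "nat list \<Rightarrow> real poly" where
  "hermite_wronskian lam = wronskian (map hermite (degvec lam))"

lemma coeff_hermite_partition:
  "coeff (hermite_partition lam) t = coeff (hermite_wronskian lam) t / real_of_int (vandermonde_deg lam)"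
  by (simp add: hermite_partition_def hermite_wronskian_def)

lemma coeff_hermite_wronskian:
  "coeff (hermite_wronskian lam) m = (\<Sum>\<kappa>\<in>{..<length lam} \<rightarrow>\<^sub>E {..sum_list (degvec lam)}.
      if (\<Sum>j<length lam. \<kappa> j) - (\<Sum>i<length lam. i) = m
      then (\<Prod>j<length lam. coeff (hermite (degvec lam ! j)) (\<kappa> j))
        * det_fn (length lam) (\<lambda>i j. ffact (real (\<kappa> j)) i)
      else 0)"
proof -
  let ?fs = "map hermite (degvec lam)"
  have "degree f \<le> sum_list (degvec lam)" if f: "f \<in> set ?fs" for f
  proof -
    obtain n where "n \<in> set (degvec lam)" "f = hermite n"
      using f by auto
    then show ?thesis
      using degree_hermite[of n] member_le_sum_list[of n "degvec lam"] by simp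
  qed
  then have "coeff (hermite_wronskian lam) m = (\<Sum>\<kappa>\<in>{..<length ?fs} \<rightarrow>\<^sub>E {..sum_list (degvec lam)}.
      if (\<Sum>j<length ?fs. \<kappa> j) - (\<Sum>i<length ?fs. i) = m
      then (\<Prod>j<length ?fs. coeff (?fs ! j) (\<kappa> j)) * det_fn (length ?fs) (\<lambda>i j. ffact (real (\<kappa> j)) i)
      else 0)"
    unfolding hermite_wronskian_def by (rule coeff_wronskian)
  also have "\<dots> = (\<Sum>\<kappa>\<in>{..<length lam} \<rightarrow>\<^sub>E {..sum_list (degvec lam)}.
      if (\<Sum>j<length lam. \<kappa> j) - (\<Sum>i<length lam. i) = m
      then (\<Prod>j<length lam. coeff (hermite (degvec lam ! j)) (\<kappa> j))
        * det_fn (length lam) (\<lambda>i j. ffact (real (\<kappa> j)) i)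
      else 0)"
    by (intro sum.cong if_cong arg_cong2[where f = "(*)"] prod.cong) simp_all
  finally show ?thesis .
qed

lemma hermite_wronskian_term_nonzero:
  assumes lam: "is_partition lam"
    and coeffs: "(\<Prod>j<length lam. coeff (hermite (degvec lam ! j)) (\<kappa> j)) \<noteq> 0"
    and det: "det_fn (length lam) (\<lambda>i j. ffact (real (\<kappa> j)) i) \<noteq> 0"
  shows "\<And>j. j < length lam \<Longrightarrow> \<kappa> j \<le> degvec lam ! j \<and> even (degvec lam ! j + \<kappa> j)"
    and "sum_list (two_core lam) + (\<Sum>i<length lam. i) \<le> (\<Sum>j<length lam. \<kappa> j)"
proof -
  show bounds: "\<kappa> j \<le> degvec lam ! j \<and> even (degvec lam ! j + \<kappa> j)" if "j < length lam" for j
  proof -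
    have "coeff (hermite (degvec lam ! j)) (\<kappa> j) \<noteq> 0"
      using coeffs that by simp
    then have "\<not> (degvec lam ! j < \<kappa> j \<or> odd (degvec lam ! j + \<kappa> j))"
      using coeff_hermite_eq_0 by blast
    then show ?thesis
      by simp
  qed
  have "inj_on \<kappa> {..<length lam}"
  proof (rule inj_onI, rule ccontr)
    fix j k assume "j \<in> {..<length lam}" "k \<in> {..<length lam}" "\<kappa> j = \<kappa> k" "j \<noteq> k"
    then have "det_fn (length lam) (\<lambda>i j. ffact (real (\<kappa> j)) i) = 0"
      by (intro det_fn_identical_columns[of j _ k]) auto
    with det show False
      by simp
  qed
  then show "sum_list (two_core lam) + (\<Sum>i<length lam. i) \<le> (\<Sum>j<length lam. \<kappa> j)"
    using two_core_size_le_sum[OF lam] bounds by blast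
qed

lemma coeff_hermite_wronskian_nonzero_imp:
  assumes lam: "is_partition lam" and nonzero: "coeff (hermite_wronskian lam) m \<noteq> 0"
  shows "sum_list (two_core lam) \<le> m \<and> m \<le> sum_list lam \<and> even (m + sum_list lam)"
proof -
  define l where "l = length lam"
  obtain \<kappa> where "\<kappa> \<in> {..<l} \<rightarrow>\<^sub>E {..sum_list (degvec lam)}"
    and "(if (\<Sum>j<l. \<kappa> j) - (\<Sum>i<l. i) = m
      then (\<Prod>j<l. coeff (hermite (degvec lam ! j)) (\<kappa> j)) * det_fn l (\<lambda>i j. ffact (real (\<kappa> j)) i)
      else 0) \<noteq> 0"
    using nonzero unfolding coeff_hermite_wronskian l_def[symmetric]
    by (rule sum.not_neutral_contains_not_neutral)
  then have m: "(\<Sum>j<l. \<kappa> j) - (\<Sum>i<l. i) = m"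
    and coeffs: "(\<Prod>j<l. coeff (hermite (degvec lam ! j)) (\<kappa> j)) \<noteq> 0"
    and det: "det_fn l (\<lambda>i j. ffact (real (\<kappa> j)) i) \<noteq> 0"
    by (auto split: if_splits)
  note bounds = hermite_wronskian_term_nonzero[OF lam coeffs[unfolded l_def] det[unfolded l_def], folded l_def]
  have nat_bounds: "c \<le> K - S \<and> K - S \<le> N \<and> even (K - S + N)"
    if "c + S \<le> K" "K \<le> T" "T = N + S" "even (K + T)" for c S K T N :: nat
    using that by presburger
  have "(\<Sum>j<l. \<kappa> j) \<le> (\<Sum>j<l. degvec lam ! j)"
    using bounds(1) by (intro sum_mono) simp
  moreover have "(\<Sum>j<l. degvec lam ! j) = sum_list lam + (\<Sum>i<l. i)"
    unfolding l_def by (rule sum_degvec_nth)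
  moreover have "even ((\<Sum>j<l. \<kappa> j) + (\<Sum>j<l. degvec lam ! j))"
    unfolding sum.distrib[symmetric] using bounds(1) by (intro dvd_sum) (simp add: add.commute)
  ultimately show ?thesis
    using nat_bounds[OF bounds(2)] m by simp
qed


section \<open>The subleading coefficient\<close>

text \<open>Restricted to the row indices, so that it lies in the set of exponent vectors of
  coeff_hermite_wronskian.\<close>

definition lowered_degvec :: "nat list \<Rightarrow> nat \<Rightarrow> nat \<Rightarrow> nat" where
  "lowered_degvec lam j =
     restrict (\<lambda>k. if k = j then degvec lam ! k - 2 else degvec lam ! k) {..<length lam}"

lemma inj_on_lowered_degvec: "inj_on (lowered_degvec lam) {j. j < length lam \<and> 2 \<le> degvec lam ! j}"
proof (rule inj_onI)
  fix a b
  assume a: "a \<in> {j. j < length lam \<and> 2 \<le> degvec lam ! j}" and b: "b \<in> {j. j < length lam \<and> 2 \<le> degvec lam ! j}"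
    and "lowered_degvec lam a = lowered_degvec lam b"
  then have "lowered_degvec lam a a = lowered_degvec lam b a"
    by simp
  then show "a = b"
    using a b by (auto simp: lowered_degvec_def split: if_splits)
qed

text \<open>The exponents are bounded by the degrees, have their parities and sum to two less, so
  they differ from the degrees in a single place.\<close>

lemma hermite_wronskian_subleading_support:
  assumes lam: "is_partition lam" and size: "2 \<le> sum_list lam"
    and \<kappa>: "\<kappa> \<in> {..<length lam} \<rightarrow>\<^sub>E {..sum_list (degvec lam)}"
    and m: "(\<Sum>j<length lam. \<kappa> j) - (\<Sum>i<length lam. i) = sum_list lam - 2"
    and coeffs: "(\<Prod>j<length lam. coeff (hermite (degvec lam ! j)) (\<kappa> j)) \<noteq> 0"
    and det: "det_fn (length lam) (\<lambda>i j. ffact (real (\<kappa> j)) i) \<noteq> 0"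
  obtains j where "j < length lam" "2 \<le> degvec lam ! j" "\<kappa> = lowered_degvec lam j"
proof -
  define l where "l = length lam"
  define D where "D k = degvec lam ! k - \<kappa> k" for k
  note bounds = hermite_wronskian_term_nonzero[OF lam coeffs det, folded l_def]
  have "(\<Sum>k<l. \<kappa> k) + 2 = (\<Sum>k<l. degvec lam ! k)"
    using bounds(2) m size sum_degvec_nth[of lam] unfolding l_def by linarith
  moreover have "(\<Sum>k<l. D k) = (\<Sum>k<l. degvec lam ! k) - (\<Sum>k<l. \<kappa> k)"
    unfolding D_def using bounds(1) by (intro sum_subtractf_nat) simp
  ultimately have sum_D: "(\<Sum>k<l. D k) = 2"
    by simp
  then obtain j where j: "j < l" "D j \<noteq> 0"
    by (metis lessThan_iff sum.neutral zero_neq_numeral)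
  have split: "(\<Sum>k<l. D k) = D j + (\<Sum>k\<in>{..<l} - {j}. D k)"
    using j(1) by (simp add: sum.remove)
  have "even (D j)"
    using bounds(1)[OF j(1)] unfolding D_def by presburger
  then have "D j = 2"
    using j(2) split sum_D by presburger
  then have others: "D k = 0" if "k < l" "k \<noteq> j" for k
    using split sum_D that by simp
  show ?thesis
  proof
    show "j < length lam" "2 \<le> degvec lam ! j"
      using j(1) \<open>D j = 2\<close> by (simp_all add: l_def D_def)
    show "\<kappa> = lowered_degvec lam j"
    proof
      fix k
      show "\<kappa> k = lowered_degvec lam j k"
        using \<kappa> bounds(1)[of k] others[of k] \<open>D j = 2\<close>
        by (cases "k < l") (auto simp: D_def l_def lowered_degvec_def PiE_def extensional_def)
    qed
  qed
qed

lemma hermite_wronskian_lowered_term: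
  assumes j: "j < length lam" "2 \<le> degvec lam ! j"
  shows "(\<Sum>k<length lam. lowered_degvec lam j k) - (\<Sum>i<length lam. i) = sum_list lam - 2"
    and "(\<Prod>k<length lam. coeff (hermite (degvec lam ! k)) (lowered_degvec lam j k))
        * det_fn (length lam) (\<lambda>i k. ffact (real (lowered_degvec lam j k)) i)
      = - (1 / 2) * det_fn (length lam) (\<lambda>i k. if k = j
          then ffact (real (degvec lam ! k)) (Suc (Suc i)) else ffact (real (degvec lam ! k)) i)"
proof -
  define l where "l = length lam"
  define \<kappa> where "\<kappa> = lowered_degvec lam j"
  define x where "x k = real (degvec lam ! k)" for k
  have \<kappa>_j: "\<kappa> j = degvec lam ! j - 2"
    using j by (simp add: \<kappa>_def lowered_degvec_def)
  have \<kappa>_other: "\<kappa> k = degvec lam ! k" if "k < l" "k \<noteq> j" for k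
    using that by (simp add: \<kappa>_def lowered_degvec_def l_def)
  have j_in: "j \<in> {..<l}"
    using j(1) by (simp add: l_def)
  have "(\<Sum>k\<in>{..<l} - {j}. \<kappa> k) = (\<Sum>k\<in>{..<l} - {j}. degvec lam ! k)"
    by (rule sum.cong) (simp_all add: \<kappa>_other)
  then have "(\<Sum>k<l. \<kappa> k) + 2 = (\<Sum>k<l. degvec lam ! k)"
    using j(2) by (simp add: sum.remove[OF _ j_in] \<kappa>_j)
  then show "(\<Sum>k<length lam. lowered_degvec lam j k) - (\<Sum>i<length lam. i) = sum_list lam - 2"
    using sum_degvec_nth[of lam] unfolding l_def \<kappa>_def by linarith
  have "(\<Prod>k\<in>{..<l} - {j}. coeff (hermite (degvec lam ! k)) (\<kappa> k)) = 1"
    by (rule prod.neutral) (simp add: \<kappa>_other coeff_hermite_self)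
  then have "(\<Prod>k<l. coeff (hermite (degvec lam ! k)) (\<kappa> k)) = - (x j * (x j - 1) / 2)"
    using coeff_hermite_subleading[OF j(2)] by (simp add: prod.remove[OF _ j_in] \<kappa>_j x_def)
  moreover have "det_fn l (\<lambda>i k. if k = j then ffact (x k) (Suc (Suc i)) else ffact (x k) i)
      = det_fn l (\<lambda>i k. if k = j then x j * (x j - 1) * ffact (real (\<kappa> k)) i else ffact (real (\<kappa> k)) i)"
    using j by (intro det_fn_cong) (auto simp: \<kappa>_j \<kappa>_other ffact_Suc_shift x_def of_nat_diff l_def algebra_simps)
  ultimately show "(\<Prod>k<length lam. coeff (hermite (degvec lam ! k)) (lowered_degvec lam j k))
        * det_fn (length lam) (\<lambda>i k. ffact (real (lowered_degvec lam j k)) i)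
      = - (1 / 2) * det_fn (length lam) (\<lambda>i k. if k = j
          then ffact (real (degvec lam ! k)) (Suc (Suc i)) else ffact (real (degvec lam ! k)) i)"
    using j(1) unfolding l_def x_def \<kappa>_def by (simp add: det_fn_scale_column)
qed

lemma det_fn_ffact_shift_column_eq_0:
  assumes "j < n" "m j < 2"
  shows "det_fn n (\<lambda>i k. if k = j then ffact (real (m k)) (Suc (Suc i)) else ffact (real (m k)) i) = 0"
proof -
  have "det_fn n (\<lambda>i k. if k = j then ffact (real (m k)) (Suc (Suc i)) else ffact (real (m k)) i)
      = det_fn n (\<lambda>i k. if k = j then 0 * ffact (real (m k)) i else ffact (real (m k)) i)"
    using assms(2) by (intro det_fn_cong) (auto simp: ffact_of_nat_eq_0)
  then show ?thesis
    using assms(1) by (simp add: det_fn_scale_column)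
qed

lemma coeff_hermite_wronskian_subleading_eq_sum:
  assumes lam: "is_partition lam" and size: "2 \<le> sum_list lam"
  shows "coeff (hermite_wronskian lam) (sum_list lam - 2) = - (1 / 2) * (\<Sum>j<length lam.
    det_fn (length lam) (\<lambda>i k. if k = j
      then ffact (real (degvec lam ! k)) (Suc (Suc i)) else ffact (real (degvec lam ! k)) i))"
proof -
  define l where "l = length lam"
  define J where "J = {j. j < l \<and> 2 \<le> degvec lam ! j}"
  define B where "B j = det_fn l (\<lambda>i k. if k = j
      then ffact (real (degvec lam ! k)) (Suc (Suc i)) else ffact (real (degvec lam ! k)) i)" for j
  define T where "T \<kappa> = (if (\<Sum>j<l. \<kappa> j) - (\<Sum>i<l. i) = sum_list lam - 2
      then (\<Prod>j<l. coeff (hermite (degvec lam ! j)) (\<kappa> j)) * det_fn l (\<lambda>i j. ffact (real (\<kappa> j)) i)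
      else 0)" for \<kappa>
  define PI where "PI = {..<l} \<rightarrow>\<^sub>E {..sum_list (degvec lam)}"
  have lowered_PI: "lowered_degvec lam ` J \<subseteq> PI"
    using elem_le_sum_list[of _ "degvec lam"] by (fastforce simp: lowered_degvec_def J_def PI_def l_def)
  have T_0: "T \<kappa> = 0" if \<kappa>: "\<kappa> \<in> PI - lowered_degvec lam ` J" for \<kappa>
  proof (rule ccontr)
    assume "T \<kappa> \<noteq> 0"
    then have "(\<Sum>j<length lam. \<kappa> j) - (\<Sum>i<length lam. i) = sum_list lam - 2"
      and "(\<Prod>j<length lam. coeff (hermite (degvec lam ! j)) (\<kappa> j)) \<noteq> 0"
      and "det_fn (length lam) (\<lambda>i j. ffact (real (\<kappa> j)) i) \<noteq> 0"
      by (simp_all add: T_def l_def del: prod_zero_iff split: if_splits)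
    moreover have "\<kappa> \<in> {..<length lam} \<rightarrow>\<^sub>E {..sum_list (degvec lam)}"
      using \<kappa> by (simp add: PI_def l_def)
    ultimately obtain j where "j < l" "2 \<le> degvec lam ! j" "\<kappa> = lowered_degvec lam j"
      using hermite_wronskian_subleading_support[OF lam size] unfolding l_def by blast
    then show False
      using \<kappa> by (auto simp: J_def)
  qed
  have "coeff (hermite_wronskian lam) (sum_list lam - 2) = (\<Sum>\<kappa>\<in>PI. T \<kappa>)"
    unfolding coeff_hermite_wronskian PI_def T_def l_def by (rule refl)
  also have "\<dots> = (\<Sum>\<kappa>\<in>lowered_degvec lam ` J. T \<kappa>)"
    using lowered_PI T_0 by (intro sum.mono_neutral_right) (auto simp: PI_def intro: finite_PiE)
  also have "\<dots> = (\<Sum>j\<in>J. T (lowered_degvec lam j))"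
    using inj_on_lowered_degvec[of lam] by (simp add: sum.reindex J_def l_def)
  also have "\<dots> = - (1 / 2) * (\<Sum>j\<in>J. B j)"
    using hermite_wronskian_lowered_term[of _ lam]
    by (simp add: T_def B_def J_def l_def sum_distrib_left)
  also have "(\<Sum>j\<in>J. B j) = (\<Sum>j<l. B j)"
    using det_fn_ffact_shift_column_eq_0[of _ l "(!) (degvec lam)"]
    by (intro sum.mono_neutral_left) (simp_all add: J_def B_def not_le subset_eq)
  finally show ?thesis
    by (simp add: B_def l_def)
qed

lemma real_vandermonde_deg:
  "real_of_int (vandermonde_deg lam) = det_fn (length lam) (\<lambda>i j. ffact (real (degvec lam ! j)) i)"
  by (simp add: vandermonde_deg_def Let_def of_int_prod det_fn_ffact_Vandermonde)

lemma vandermonde_deg_nonzero: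
  assumes "is_partition lam"
  shows "vandermonde_deg lam \<noteq> 0"
  using degvec_strict_decreasing[OF assms] by (auto simp: vandermonde_deg_def Let_def) (metis less_irrefl)

lemma coeff_hermite_wronskian_subleading:
  assumes lam: "is_partition lam" and size: "2 \<le> sum_list lam"
  shows "coeff (hermite_wronskian lam) (sum_list lam - 2)
    = - real_of_int (content_sum lam) * real_of_int (vandermonde_deg lam)"
proof -
  define l where "l = length lam"
  have "0 < l"
    using size by (cases lam) (simp_all add: l_def)
  have "(\<Sum>n\<leftarrow>degvec lam. f n) = (\<Sum>k<l. f (degvec lam ! k))" for f :: "nat \<Rightarrow> real"
    by (simp add: sum_list_sum_nth atLeast0LessThan l_def)
  then have "(\<Sum>k<l. real (degvec lam ! k) * (real (degvec lam ! k) - 1))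
      - 2 * real (l - 1) * ((\<Sum>k<l. real (degvec lam ! k)) - (\<Sum>i<l. real i))
      - (\<Sum>i<l. real i * (real i - 1)) = 2 * real_of_int (content_sum lam)"
    using content_sum_degvec[of lam] \<open>0 < l\<close> by (simp add: l_def of_nat_diff Suc_le_eq)
  then show ?thesis
    unfolding coeff_hermite_wronskian_subleading_eq_sum[OF lam size, folded l_def]
      sum_det_fn_ffact_shift_column[OF \<open>0 < l\<close>]
    by (simp add: real_vandermonde_deg l_def)
qed


section \<open>The polynomial R\<close>

lemma coeff_pcompose_x_squared:
  fixes p :: "'a :: comm_semiring_1 poly"
  shows "coeff (pcompose p [:0, 0, 1:]) t = (if even t then coeff p (t div 2) else 0)"
proof (induction p arbitrary: t rule: pCons_induct)
  case (pCons a p)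
  have composed: "pcompose (pCons a p) [:0, 0, 1:] = pCons a (pCons 0 (pcompose p [:0, 0, 1:]))"
    by (simp add: pcompose_pCons mult_pCons_left)
  show ?case
  proof (cases t)
    case (Suc t1)
    show ?thesis
    proof (cases t1)
      case (Suc t2)
      then show ?thesis
        using pCons.IH[of t2] \<open>t = Suc t1\<close> composed by simp
    qed (use composed Suc in simp)
  qed (use composed in simp)
qed simp

lemma coeff_the_monom_mult_pcompose_x_squared:
  fixes p :: "'a :: comm_semiring_1 poly"
  assumes support: "\<And>t. coeff p t \<noteq> 0 \<Longrightarrow> c \<le> t \<and> even (t - c)"
  shows "coeff (THE R. p = monom 1 c * pcompose R [:0, 0, 1:]) i = coeff p (c + 2 * i)"
proof -
  define R where "R = (\<Sum>i\<le>degree p. monom (coeff p (c + 2 * i)) i)"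
  have coeff_R: "coeff R i = coeff p (c + 2 * i)" for i
    by (auto simp: R_def coeff_sum coeff_monom intro!: coeff_eq_0)
  have "p = monom 1 c * pcompose R [:0, 0, 1:]"
  proof (rule poly_eqI)
    fix t
    show "coeff p t = coeff (monom 1 c * pcompose R [:0, 0, 1:]) t"
    proof (cases "c \<le> t \<and> even (t - c)")
      case True
      then obtain k where "t - c = 2 * k"
        by (meson evenE)
      with True have "t = c + 2 * k"
        by simp
      then show ?thesis
        by (simp add: coeff_monom_mult coeff_pcompose_x_squared coeff_R)
    next
      case False
      then have "coeff p t = 0"
        using support by blast
      moreover have "coeff (monom 1 c * pcompose R [:0, 0, 1:]) t = 0"
        using False by (auto simp: coeff_monom_mult coeff_pcompose_x_squared)
      ultimately show ?thesis
        by simp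
    qed
  qed
  moreover have "R' = R" if "p = monom 1 c * pcompose R' [:0, 0, 1:]" for R'
    by (rule poly_eqI) (simp add: coeff_R that coeff_monom_mult coeff_pcompose_x_squared)
  ultimately have "(THE R. p = monom 1 c * pcompose R [:0, 0, 1:]) = R"
    by (rule the_equality)
  then show ?thesis
    by (simp add: coeff_R)
qed

theorem proposition4p16:
  fixes lam :: "nat list"
  assumes "is_partition lam"
    and "quot_size lam > 0"
  shows "coeff (R_poly lam) (quot_size lam - 1) = - of_int (content_sum lam)"
proof -
  define c where "c = sum_list (two_core lam)"
  have size: "sum_list lam = c + 2 * quot_size lam"
    using sum_list_two_core[OF assms(1)] by (simp add: c_def)
  have support: "c \<le> t \<and> even (t - c)" if "coeff (hermite_partition lam) t \<noteq> 0" for t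
  proof -
    have "coeff (hermite_wronskian lam) t \<noteq> 0"
      using that by (simp add: coeff_hermite_partition)
    then have "c \<le> t" "even (t + sum_list lam)"
      using coeff_hermite_wronskian_nonzero_imp[OF assms(1)] by (auto simp: c_def)
    then show ?thesis
      using size by presburger
  qed
  have "coeff (R_poly lam) (quot_size lam - 1) = coeff (hermite_partition lam) (c + 2 * (quot_size lam - 1))"
    unfolding R_poly_def c_def[symmetric] using support by (rule coeff_the_monom_mult_pcompose_x_squared)
  also have "c + 2 * (quot_size lam - 1) = sum_list lam - 2"
    using size assms(2) by simp
  also have "coeff (hermite_partition lam) (sum_list lam - 2) = - of_int (content_sum lam)"
    using coeff_hermite_wronskian_subleading[OF assms(1)] vandermonde_deg_nonzero[OF assms(1)] size assms(2)
    by (simp add: coeff_hermite_partition)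
  finally show ?thesis .
qed

end
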